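(* The chaotic relaxation for the system $\mathbf{Lx}=\mathbf{b}$ defined by the splitting $\mathbf{D + \tilde{L}}$, with $\mathbf{D}$ nonsingular block diagonal and $\mathbf{\tilde{L}}$ strictly lower block triangular, converges.
   Context: Let $\mathbf{L}\in\mathbb{R}^{n\times n}$ be lower block triangular with square $b\times b$ blocks ($n$ divisible by $b$) and nonsingular diagonal blocks, split as $\mathbf{L}=\mathbf{D}+\tilde{\mathbf{L}}$ with $\mathbf{D}$ its block diagonal part and $\tilde{\mathbf{L}}$ its strictly lower block triangular part. For a splitting $\mathbf{L}=\mathbf{M}+\mathbf{N}$ (here $\mathbf{M}=\mathbf{D}$, $\mathbf{N}=\tilde{\mathbf{L}}$), set $\mathbf{B}:=-\mathbf{M}^{-1}\mathbf{N}$ and $\mathbf{C}:=\mathbf{M}^{-1}$ with rows $\mathbf{c}_i^T$. The chaotic relaxation (Chazan–Miranker) is the iteration $x_i^{j+1}=x_i^j$ if $i\neq u(j)$ and $x_i^{j+1}=\sum_{\alpha=1}^n B_{i\alpha}x_\alpha^{j-s_\alpha(j)}+\mathbf{c}_i^T\mathbf{b}$ if $i=u(j)$, where the shift functions $s_\alpha:\mathbb{N}\to\mathbb{N}$ satisfy $0\le s_\alpha(j)\le\min\{j-1,\hat s\}$ for some fixed $\hat s$, and the update function $u:\mathbb{N}\to\{1,\dots,n\}$ is such that for every $i$ and every $j$ there is $l>j$ with $u(l)=i$. Chazan–Miranker's theorem: such a scheme converges if $\rho(|\mathbf{B}|)<1$. *)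

theory Defs
  imports "HOL-Analysis.Analysis" "Jordan_Normal_Form.Matrix" "Jordan_Normal_Form.Determinant"
    "Jordan_Normal_Form.Gauss_Jordan_Elimination"
begin

text \<open>Block structure with square blocks of size bs (0-based indices; index i lies in block i div bs).\<close>

definition lower_block_triangular :: "nat \<Rightarrow> nat \<Rightarrow> real mat \<Rightarrow> bool" where
  "lower_block_triangular n bs L \<longleftrightarrow> L \<in> carrier_mat n n \<and>
     (\<forall>i<n. \<forall>j<n. i div bs < j div bs \<longrightarrow> L $$ (i,j) = 0)"

definition diag_block :: "nat \<Rightarrow> real mat \<Rightarrow> nat \<Rightarrow> real mat" where
  "diag_block bs L p = mat bs bs (\<lambda>(i,j). L $$ (p*bs+i, p*bs+j))"

definition block_diag_part :: "nat \<Rightarrow> nat \<Rightarrow> real mat \<Rightarrow> real mat" where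
  "block_diag_part n bs L = mat n n (\<lambda>(i,j). if i div bs = j div bs then L $$ (i,j) else 0)"

definition strictly_lower_block_part :: "nat \<Rightarrow> nat \<Rightarrow> real mat \<Rightarrow> real mat" where
  "strictly_lower_block_part n bs L = L - block_diag_part n bs L"

text \<open>Chaotic relaxation (Chazan--Miranker) for the splitting L = M + N, with B = -M^{-1}N, C = M^{-1}.
  Iterates x j for j >= 1; x 1 is the arbitrary initial vector.\<close>

definition chaotic_relaxation ::
  "nat \<Rightarrow> real mat \<Rightarrow> real mat \<Rightarrow> real vec \<Rightarrow> (nat \<Rightarrow> nat) \<Rightarrow> (nat \<Rightarrow> nat \<Rightarrow> nat) \<Rightarrow> nat
     \<Rightarrow> (nat \<Rightarrow> real vec) \<Rightarrow> bool" where
  "chaotic_relaxation n M N b u s shat x \<longleftrightarrow>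
     (let Minv = the (mat_inverse M); B = - (Minv * N); C = Minv in
     (\<forall>j\<ge>1. \<forall>\<alpha><n. s \<alpha> j \<le> min (j - 1) shat) \<and>
     (\<forall>j\<ge>1. u j \<in> {0..<n}) \<and>
     (\<forall>i<n. \<forall>j\<ge>1. \<exists>l>j. u l = i) \<and>
     (\<forall>j\<ge>1. dim_vec (x j) = n) \<and>
     (\<forall>j\<ge>1. \<forall>i<n.
        x (j+1) $ i = (if i \<noteq> u j then x j $ i
                       else (\<Sum>\<alpha><n. B $$ (i,\<alpha>) * x (j - s \<alpha> j) $ \<alpha>) + row C i \<bullet> b)))"

end

theory Submission
  imports Defs
begin

text \<open>Since the inverse of the block diagonal part D is again block diagonal, the iteration
  matrix B = -D^{-1} L~ is strictly lower block triangular. Then rho(|B|) = 0, but instead of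
  invoking Chazan--Miranker a direct argument gives more: components of block p only read
  components of earlier blocks, so by induction over p every component of the iterates is
  eventually constant -- once the components it reads have settled and the bounded delays have
  passed, its next update fixes it for good. The eventual value is a fixed point
  x = B x + D^{-1} b, i.e. a solution of L x = b.\<close>

lemma block_end_le:
  fixes n bs p :: nat
  assumes "bs dvd n" "p < n div bs"
  shows "p * bs + bs \<le> n"
proof -
  have "Suc p * bs \<le> n div bs * bs" using assms(2) by (intro mult_le_mono1) simp
  then show ?thesis using assms(1) by simp
qed

lemma sum_over_block:
  fixes f :: "nat \<Rightarrow> 'a::comm_monoid_add"
  assumes "bs dvd n" "p < n div bs" "\<And>j. j < n \<Longrightarrow> j div bs \<noteq> p \<Longrightarrow> f j = 0"
  shows "(\<Sum>j\<in>{0..<n}. f j) = (\<Sum>k\<in>{0..<bs}. f (p * bs + k))"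
proof -
  have block_sub: "{p * bs..<p * bs + bs} \<subseteq> {0..<n}" using block_end_le[OF assms(1,2)] by auto
  have "bs > 0" using assms(2) by (cases "bs = 0") auto
  then have "j \<in> {p * bs..<p * bs + bs}" if "j div bs = p" for j
    using that div_mult_mod_eq[of j bs] by (metis atLeastLessThan_iff le_add1 mod_less_divisor
        mult.commute nat_add_left_cancel_less)
  then have "f j = 0" if "j \<in> {0..<n} - {p * bs..<p * bs + bs}" for j
    using that assms(3) by (metis DiffD1 DiffD2 atLeastLessThan_iff)
  then have "(\<Sum>j\<in>{0..<n}. f j) = (\<Sum>j\<in>{p * bs..<p * bs + bs}. f j)"
    by (intro sum.mono_neutral_right[OF _ block_sub]) auto
  also have "\<dots> = (\<Sum>k\<in>{0..<bs}. f (p * bs + k))"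
    using sum.shift_bounds_nat_ivl[of f 0 "p * bs" bs] by (simp add: add.commute)
  finally show ?thesis .
qed

lemma index_block_diag_part_mult_vec:
  assumes "bs dvd n" "p < n div bs" "k < bs" "v \<in> carrier_vec n"
  shows "(block_diag_part n bs L *\<^sub>v v) $ (p * bs + k)
    = (diag_block bs L p *\<^sub>v vec bs (\<lambda>k. v $ (p * bs + k))) $ k"
proof -
  have row_in_block: "(p * bs + k) div bs = p" using assms(3) by simp
  have "(block_diag_part n bs L *\<^sub>v v) $ (p * bs + k)
      = (\<Sum>j\<in>{0..<n}. (if (p * bs + k) div bs = j div bs then L $$ (p * bs + k, j) else 0) * v $ j)"
    using assms block_end_le[OF assms(1,2)] by (simp add: block_diag_part_def scalar_prod_def)
  also have "\<dots> = (\<Sum>k'\<in>{0..<bs}. L $$ (p * bs + k, p * bs + k') * v $ (p * bs + k'))"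
    using row_in_block by (subst sum_over_block[OF assms(1,2)]) (auto intro: sum.cong)
  also have "\<dots> = (diag_block bs L p *\<^sub>v vec bs (\<lambda>k. v $ (p * bs + k))) $ k"
    using assms(3) by (simp add: diag_block_def scalar_prod_def)
  finally show ?thesis .
qed

text \<open>A kernel vector of the block diagonal part restricts to a kernel vector of the diagonal
  block containing one of its nonzero entries.\<close>

lemma det_block_diag_part_nonzero:
  assumes "bs dvd n" "\<forall>p<n div bs. det (diag_block bs L p) \<noteq> 0"
  shows "det (block_diag_part n bs L) \<noteq> 0"
proof
  have carrier: "block_diag_part n bs L \<in> carrier_mat n n" by (simp add: block_diag_part_def)
  assume "det (block_diag_part n bs L) = 0"
  then obtain v where v: "v \<in> carrier_vec n" "v \<noteq> 0\<^sub>v n" "block_diag_part n bs L *\<^sub>v v = 0\<^sub>v n"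
    using det_0_iff_vec_prod_zero[OF carrier] by blast
  then obtain i where i: "i < n" "v $ i \<noteq> 0" by (metis eq_vecI carrier_vecD index_zero_vec)
  then have "bs > 0" using assms(1) by (cases "bs = 0") auto
  define p where "p = i div bs"
  define w where "w = vec bs (\<lambda>k. v $ (p * bs + k))"
  have i_split: "i = p * bs + i mod bs" by (simp add: p_def)
  have p: "p < n div bs" using i(1) \<open>bs > 0\<close> assms(1) unfolding p_def
    by (simp add: less_mult_imp_div_less)
  have "w \<noteq> 0\<^sub>v bs"
  proof
    assume "w = 0\<^sub>v bs"
    then have "w $ (i mod bs) = 0" using \<open>bs > 0\<close> by simp
    then show False using i(2) i_split \<open>bs > 0\<close> by (simp add: w_def)
  qed
  moreover have "(diag_block bs L p *\<^sub>v w) $ k = 0" if "k < bs" for k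
    using v(3) block_end_le[OF assms(1) p] that
      index_block_diag_part_mult_vec[OF assms(1) p that v(1), where L = L]
    by (simp add: w_def)
  then have "diag_block bs L p *\<^sub>v w = 0\<^sub>v bs"
    by (intro eq_vecI) (auto simp: diag_block_def)
  moreover have "diag_block bs L p \<in> carrier_mat bs bs" "w \<in> carrier_vec bs"
    by (simp_all add: diag_block_def w_def)
  ultimately have "det (diag_block bs L p) = 0" using det_0_iff_vec_prod_zero by blast
  then show False using assms(2) p by blast
qed

definition block_diagonal :: "nat \<Rightarrow> nat \<Rightarrow> 'a::zero mat \<Rightarrow> bool" where
  "block_diagonal n bs A \<longleftrightarrow> A \<in> carrier_mat n n \<and>
     (\<forall>i<n. \<forall>j<n. i div bs \<noteq> j div bs \<longrightarrow> A $$ (i,j) = 0)"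

definition strictly_lower_block_triangular :: "nat \<Rightarrow> nat \<Rightarrow> 'a::zero mat \<Rightarrow> bool" where
  "strictly_lower_block_triangular n bs A \<longleftrightarrow> A \<in> carrier_mat n n \<and>
     (\<forall>i<n. \<forall>j<n. i div bs \<le> j div bs \<longrightarrow> A $$ (i,j) = 0)"

definition block_proj :: "nat \<Rightarrow> nat \<Rightarrow> nat \<Rightarrow> 'a::{zero,one} mat" where
  "block_proj n bs q = mat n n (\<lambda>(i,j). if i = j \<and> i div bs = q then 1 else 0)"

lemma index_block_proj_mult:
  fixes A :: "'a::semiring_1 mat"
  assumes "A \<in> carrier_mat n m" "i < n" "j < m"
  shows "(block_proj n bs q * A) $$ (i,j) = (if i div bs = q then A $$ (i,j) else 0)"
proof -
  have "(block_proj n bs q * A) $$ (i,j)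
      = (\<Sum>k\<in>{0..<n}. (if i = k \<and> i div bs = q then 1 else 0) * A $$ (k,j))"
    using assms by (simp add: block_proj_def scalar_prod_def)
  also have "\<dots> = (if i div bs = q then A $$ (i,j) else 0)"
    using assms(2) by (simp add: if_distrib[of "\<lambda>c. c * _"] cong: if_cong)
  finally show ?thesis .
qed

lemma index_mult_block_proj:
  fixes A :: "'a::semiring_1 mat"
  assumes "A \<in> carrier_mat m n" "i < m" "j < n"
  shows "(A * block_proj n bs q) $$ (i,j) = (if j div bs = q then A $$ (i,j) else 0)"
proof -
  have "(A * block_proj n bs q) $$ (i,j)
      = (\<Sum>k\<in>{0..<n}. A $$ (i,k) * (if k = j \<and> k div bs = q then 1 else 0))"
    using assms by (simp add: block_proj_def scalar_prod_def)
  also have "\<dots> = (\<Sum>k\<in>{0..<n}. if k = j then (if j div bs = q then A $$ (i,j) else 0) else 0)"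
    by (rule sum.cong) auto
  also have "\<dots> = (if j div bs = q then A $$ (i,j) else 0)"
    using assms(3) by simp
  finally show ?thesis .
qed

lemma block_diagonal_iff_commute_block_proj:
  fixes A :: "'a::semiring_1 mat"
  assumes "A \<in> carrier_mat n n"
  shows "block_diagonal n bs A \<longleftrightarrow> (\<forall>q. block_proj n bs q * A = A * block_proj n bs q)"
proof
  assume "block_diagonal n bs A"
  then have "(block_proj n bs q * A) $$ (i,j) = (A * block_proj n bs q) $$ (i,j)"
    if "i < n" "j < n" for q i j
    using that assms by (auto simp: block_diagonal_def index_block_proj_mult index_mult_block_proj)
  then show "\<forall>q. block_proj n bs q * A = A * block_proj n bs q"
    using assms by (auto intro!: eq_matI simp: block_proj_def)
next
  assume commute: "\<forall>q. block_proj n bs q * A = A * block_proj n bs q"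
  have "A $$ (i,j) = 0" if "i < n" "j < n" "i div bs \<noteq> j div bs" for i j
    using arg_cong[OF spec[OF commute, of "i div bs"], of "\<lambda>P. P $$ (i,j)"] that assms
    by (simp add: index_block_proj_mult index_mult_block_proj)
  then show "block_diagonal n bs A" using assms by (simp add: block_diagonal_def)
qed

lemma inverse_mat_commute:
  fixes A M M' :: "'a::semiring_1 mat"
  assumes "A \<in> carrier_mat n n" "M \<in> carrier_mat n n" "M' \<in> carrier_mat n n"
    and "M * M' = 1\<^sub>m n" "M' * M = 1\<^sub>m n" and "A * M = M * A"
  shows "M' * A = A * M'"
proof -
  have "M' * A = M' * (A * M * M')" using assms(1-4) by simp
  also have "\<dots> = M' * (M * A * M')" using assms(6) by simp
  also have "\<dots> = M' * M * A * M'" using assms(1-3) by (simp add: assoc_mult_mat[of _ n n _ n _ n])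
  also have "\<dots> = A * M'" using assms(1,5) by simp
  finally show ?thesis .
qed

lemma block_diagonal_inverse:
  fixes M M' :: "'a::semiring_1 mat"
  assumes "block_diagonal n bs M" "M' \<in> carrier_mat n n" "M * M' = 1\<^sub>m n" "M' * M = 1\<^sub>m n"
  shows "block_diagonal n bs M'"
proof -
  have M: "M \<in> carrier_mat n n" using assms(1) by (simp add: block_diagonal_def)
  have "M' * block_proj n bs q = block_proj n bs q * M'" for q
  proof (rule inverse_mat_commute[OF _ M assms(2-4)])
    show "block_proj n bs q \<in> carrier_mat n n" by (simp add: block_proj_def)
    show "block_proj n bs q * M = M * block_proj n bs q"
      using assms(1) block_diagonal_iff_commute_block_proj[OF M] by blast
  qed
  then show ?thesis using block_diagonal_iff_commute_block_proj[OF assms(2)] by simp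
qed

lemma strictly_lower_block_triangular_mult:
  fixes D N :: "'a::semiring_0 mat"
  assumes "block_diagonal n bs D" "strictly_lower_block_triangular n bs N"
  shows "strictly_lower_block_triangular n bs (D * N)"
proof -
  have "D $$ (i,k) * N $$ (k,j) = 0" if "i < n" "j < n" "k < n" "i div bs \<le> j div bs" for i j k
    using assms that unfolding block_diagonal_def strictly_lower_block_triangular_def
    by (cases "k div bs = i div bs") auto
  then show ?thesis
    using assms unfolding block_diagonal_def strictly_lower_block_triangular_def
    by (auto simp: scalar_prod_def intro!: sum.neutral)
qed

lemma block_diagonal_block_diag_part: "block_diagonal n bs (block_diag_part n bs L)"
  by (simp add: block_diagonal_def block_diag_part_def)

lemma strictly_lower_block_triangular_strictly_lower_block_part:
  assumes "lower_block_triangular n bs L"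
  shows "strictly_lower_block_triangular n bs (strictly_lower_block_part n bs L)"
  using assms unfolding lower_block_triangular_def strictly_lower_block_triangular_def
    strictly_lower_block_part_def block_diag_part_def
  by (auto simp: le_less)

lemma block_diag_part_plus_strictly_lower_block_part:
  assumes "L \<in> carrier_mat n n"
  shows "block_diag_part n bs L + strictly_lower_block_part n bs L = L"
  using assms by (auto intro!: eq_matI simp: strictly_lower_block_part_def block_diag_part_def)

lemma splitting_fixed_point_solves:
  fixes M N M' :: "'a::comm_ring_1 mat"
  assumes "M \<in> carrier_mat n n" "N \<in> carrier_mat n n" "M' \<in> carrier_mat n n" "M * M' = 1\<^sub>m n"
    and "z \<in> carrier_vec n" "c \<in> carrier_vec n" and fixed_point: "z = - (M' * N) *\<^sub>v z + M' *\<^sub>v c"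
  shows "(M + N) *\<^sub>v z = c"
proof -
  define w where "w = c - N *\<^sub>v z"
  have w: "w \<in> carrier_vec n" using assms(2,5,6) by (simp add: w_def)
  have "z = M' *\<^sub>v w"
  proof -
    have "- (M' * N) *\<^sub>v z + M' *\<^sub>v c = M' *\<^sub>v c - M' *\<^sub>v (N *\<^sub>v z)"
      using assms(2,3,5,6) by (intro eq_vecI) auto
    also have "\<dots> = M' *\<^sub>v w"
      using assms(2,3,5,6) by (simp add: w_def mult_minus_distrib_mat_vec)
    finally show ?thesis using fixed_point by simp
  qed
  then have "M *\<^sub>v z = (M * M') *\<^sub>v w" using assms(1,3) w by simp
  also have "\<dots> = w" using assms(4) w by simp
  finally show ?thesis
    using assms(1,2,5,6) by (simp add: w_def add_mult_distrib_mat_vec) (intro eq_vecI; simp)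
qed

lemma strictly_lower_block_triangular_uminus:
  fixes A :: "'a::group_add mat"
  assumes "strictly_lower_block_triangular n bs A"
  shows "strictly_lower_block_triangular n bs (- A)"
proof -
  have "A \<in> carrier_mat n n" using assms by (simp add: strictly_lower_block_triangular_def)
  then show ?thesis using assms by (simp add: strictly_lower_block_triangular_def carrier_matD)
qed

lemma strictly_lower_block_triangular_nonzero:
  assumes "strictly_lower_block_triangular n bs A" "i < n" "j < n" "A $$ (i,j) \<noteq> 0"
  shows "j div bs < i div bs"
  using assms unfolding strictly_lower_block_triangular_def by (meson not_le)

lemma strictly_lower_block_triangular_iteration_matrix:
  assumes "lower_block_triangular n bs L" "M' \<in> carrier_mat n n"
    and "block_diag_part n bs L * M' = 1\<^sub>m n" "M' * block_diag_part n bs L = 1\<^sub>m n"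
  shows "strictly_lower_block_triangular n bs (- (M' * strictly_lower_block_part n bs L))"
proof (rule strictly_lower_block_triangular_uminus, rule strictly_lower_block_triangular_mult)
  show "block_diagonal n bs M'"
    using block_diagonal_inverse[OF block_diagonal_block_diag_part assms(2-4)] .
  show "strictly_lower_block_triangular n bs (strictly_lower_block_part n bs L)"
    using assms(1) by (rule strictly_lower_block_triangular_strictly_lower_block_part)
qed

lemma mat_inverse_det_nonzero:
  fixes A :: "'a::field mat"
  assumes "A \<in> carrier_mat n n" "det A \<noteq> 0"
  obtains A' where "mat_inverse A = Some A'" "A' \<in> carrier_mat n n" "A * A' = 1\<^sub>m n" "A' * A = 1\<^sub>m n"
proof -
  have "mat_inverse A \<noteq> None" by (metis mat_inverse(1)[OF assms(1)] det_non_zero_imp_unit[OF assms])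
  then obtain A' where "mat_inverse A = Some A'" by blast
  with mat_inverse(2)[OF assms(1)] that show thesis by blast
qed

locale chaotic_iteration =
  fixes n :: nat and B :: "'a::semiring_0 mat" and c :: "'a vec" and u :: "nat \<Rightarrow> nat"
    and s :: "nat \<Rightarrow> nat \<Rightarrow> nat" and shat :: nat and x :: "nat \<Rightarrow> 'a vec"
  assumes delay_bounded: "\<And>j a. 1 \<le> j \<Longrightarrow> a < n \<Longrightarrow> s a j \<le> shat"
    and updated_infinitely_often: "\<And>i j. i < n \<Longrightarrow> 1 \<le> j \<Longrightarrow> \<exists>l>j. u l = i"
    and iterate_step: "\<And>i j. 1 \<le> j \<Longrightarrow> i < n \<Longrightarrow> x (j + 1) $ i =
      (if i \<noteq> u j then x j $ i else (\<Sum>a<n. B $$ (i,a) * x (j - s a j) $ a) + c $ i)"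
begin

lemma eventually_update_value:
  assumes "i < n"
    and settled: "\<And>a. a < n \<Longrightarrow> B $$ (i,a) \<noteq> 0 \<Longrightarrow> eventually (\<lambda>j. x j $ a = y a) sequentially"
  shows "eventually (\<lambda>j. x j $ i = (\<Sum>a<n. B $$ (i,a) * y a) + c $ i) sequentially"
proof -
  define v where "v = (\<Sum>a<n. B $$ (i,a) * y a) + c $ i"
  have "eventually (\<lambda>j. \<forall>a\<in>{a. a < n \<and> B $$ (i,a) \<noteq> 0}. x j $ a = y a) sequentially"
    using settled by (intro eventually_ball_finite) auto
  then obtain T where T: "\<And>j a. T \<le> j \<Longrightarrow> a < n \<Longrightarrow> B $$ (i,a) \<noteq> 0 \<Longrightarrow> x j $ a = y a"
    unfolding eventually_sequentially by blast
  have update_gives_v: "x (j + 1) $ i = v" if "T + shat + 1 \<le> j" "u j = i" for j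
  proof -
    have "B $$ (i,a) * x (j - s a j) $ a = B $$ (i,a) * y a" if "a < n" for a
      using T[of "j - s a j" a] delay_bounded[of j a] \<open>T + shat + 1 \<le> j\<close> that
      by (cases "B $$ (i,a) = 0") auto
    then show ?thesis using iterate_step[of j i] that \<open>i < n\<close> by (simp add: v_def)
  qed
  obtain l where l: "T + shat + 1 < l" "u l = i"
    using updated_infinitely_often[OF \<open>i < n\<close>, of "T + shat + 1"] by auto
  have "x j $ i = v" if "l + 1 \<le> j" for j
    using that
  proof (induction j rule: dec_induct)
    case base
    show ?case using update_gives_v l by simp
  next
    case (step j)
    then show ?case
      using update_gives_v[of j] iterate_step[of j i] l \<open>i < n\<close> by (cases "u j = i") auto
  qed
  then show ?thesis unfolding v_def eventually_sequentially by blast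
qed

lemma eventually_constant:
  fixes lvl :: "nat \<Rightarrow> nat"
  assumes levels: "\<And>i a. i < n \<Longrightarrow> a < n \<Longrightarrow> B $$ (i,a) \<noteq> 0 \<Longrightarrow> lvl a < lvl i"
  shows "\<exists>y. \<forall>i<n. eventually (\<lambda>j. x j $ i = y i) sequentially"
proof -
  have "\<exists>v. eventually (\<lambda>j. x j $ i = v) sequentially" if "i < n" for i
    using that
  proof (induction "lvl i" arbitrary: i rule: less_induct)
    case less
    then have "\<forall>a. \<exists>v. a < n \<and> B $$ (i,a) \<noteq> 0 \<longrightarrow> eventually (\<lambda>j. x j $ a = v) sequentially"
      using levels by blast
    then obtain y where "\<And>a. a < n \<Longrightarrow> B $$ (i,a) \<noteq> 0 \<Longrightarrow> eventually (\<lambda>j. x j $ a = y a) sequentially"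
      by metis
    then show ?case using eventually_update_value[OF less.prems] by blast
  qed
  then show ?thesis by metis
qed

lemma eventually_fixed_point:
  fixes lvl :: "nat \<Rightarrow> nat"
  assumes "B \<in> carrier_mat n n" "c \<in> carrier_vec n"
    and "\<And>i a. i < n \<Longrightarrow> a < n \<Longrightarrow> B $$ (i,a) \<noteq> 0 \<Longrightarrow> lvl a < lvl i"
  obtains z where "z \<in> carrier_vec n" "z = B *\<^sub>v z + c"
    and "\<forall>i<n. eventually (\<lambda>j. x j $ i = z $ i) sequentially"
proof -
  obtain y where y: "\<And>i. i < n \<Longrightarrow> eventually (\<lambda>j. x j $ i = y i) sequentially"
    using eventually_constant[of lvl, OF assms(3)] by blast
  define z where "z = vec n y"
  have "y i = (\<Sum>a<n. B $$ (i,a) * y a) + c $ i" if "i < n" for i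
  proof -
    have "eventually (\<lambda>j. x j $ i = (\<Sum>a<n. B $$ (i,a) * y a) + c $ i) sequentially"
      using eventually_update_value[of i y] that y by blast
    with y[OF that] have "eventually (\<lambda>j. y i = (\<Sum>a<n. B $$ (i,a) * y a) + c $ i) sequentially"
      by eventually_elim simp
    then show ?thesis by simp
  qed
  then have "z = B *\<^sub>v z + c"
    using assms(1,2) by (intro eq_vecI) (auto simp: z_def scalar_prod_def lessThan_atLeast0)
  moreover have "\<forall>i<n. eventually (\<lambda>j. x j $ i = z $ i) sequentially" using y by (simp add: z_def)
  moreover have "z \<in> carrier_vec n" by (simp add: z_def)
  ultimately show thesis by (intro that)
qed

end

lemma chaotic_relaxation_iteration:
  assumes "chaotic_relaxation n M N b u s shat x" "mat_inverse M = Some M'" "M' \<in> carrier_mat n n"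
  shows "chaotic_iteration n (- (M' * N)) (M' *\<^sub>v b) u s shat x"
  using assms unfolding chaotic_relaxation_def Let_def by unfold_locales auto

theorem theorem2:
  fixes n bs shat :: nat and L :: "real mat" and b :: "real vec"
    and u :: "nat \<Rightarrow> nat" and s :: "nat \<Rightarrow> nat \<Rightarrow> nat" and x :: "nat \<Rightarrow> real vec"
  assumes "bs > 0" and "bs dvd n"
    and "lower_block_triangular n bs L"
    and "\<forall>p < n div bs. det (diag_block bs L p) \<noteq> 0"
    and "b \<in> carrier_vec n"
    and "chaotic_relaxation n (block_diag_part n bs L) (strictly_lower_block_part n bs L) b u s shat x"
  shows "\<exists>xs \<in> carrier_vec n. L *\<^sub>v xs = b \<and> (\<forall>i<n. (\<lambda>j. x j $ i) \<longlonglongrightarrow> xs $ i)"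
proof -
  define D where "D = block_diag_part n bs L"
  define N where "N = strictly_lower_block_part n bs L"
  have L: "L \<in> carrier_mat n n" using assms(3) by (simp add: lower_block_triangular_def)
  have D: "D \<in> carrier_mat n n" "det D \<noteq> 0"
    using det_block_diag_part_nonzero[OF assms(2,4)] by (simp_all add: D_def block_diag_part_def)
  obtain D' where D': "mat_inverse D = Some D'" "D' \<in> carrier_mat n n" "D * D' = 1\<^sub>m n" "D' * D = 1\<^sub>m n"
    using mat_inverse_det_nonzero[OF D] by blast
  have N: "N \<in> carrier_mat n n"
    using L by (simp add: N_def strictly_lower_block_part_def block_diag_part_def minus_carrier_mat)
  have B: "strictly_lower_block_triangular n bs (- (D' * N))"
    using strictly_lower_block_triangular_iteration_matrix[OF assms(3) D'(2-4)[unfolded D_def]]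
    by (simp add: N_def)
  interpret chaotic_iteration n "- (D' * N)" "D' *\<^sub>v b" u s shat x
    using chaotic_relaxation_iteration[OF assms(6)[folded D_def N_def] D'(1,2)] .
  obtain z where z: "z \<in> carrier_vec n" "z = - (D' * N) *\<^sub>v z + D' *\<^sub>v b"
    and settles: "\<forall>i<n. eventually (\<lambda>j. x j $ i = z $ i) sequentially"
  proof (rule eventually_fixed_point)
    show "- (D' * N) \<in> carrier_mat n n" using B by (simp add: strictly_lower_block_triangular_def)
    show "D' *\<^sub>v b \<in> carrier_vec n" using D'(2) assms(5) by simp
    show "\<And>i a. i < n \<Longrightarrow> a < n \<Longrightarrow> (- (D' * N)) $$ (i,a) \<noteq> 0 \<Longrightarrow> a div bs < i div bs"
      using B by (rule strictly_lower_block_triangular_nonzero)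
  qed (rule that)
  have "(D + N) *\<^sub>v z = b"
    by (rule splitting_fixed_point_solves[OF D(1) N D'(2,3) z(1) assms(5) z(2)])
  moreover have "D + N = L"
    unfolding D_def N_def by (rule block_diag_part_plus_strictly_lower_block_part[OF L])
  moreover have "\<forall>i<n. (\<lambda>j. x j $ i) \<longlonglongrightarrow> z $ i" using settles by (auto intro: tendsto_eventually)
  ultimately show ?thesis using z(1) by blast
qed

end
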